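(* Let $\lambda,N,t,m,v$ be positive integers with $t\ge 2$ and $t\le m(t-1)$. There exists an $OCA_{\lambda}(N;t,m,t,v)$ if and only if there exists an $OCA_{\lambda}(N;t,m,t-1,v)$.
   Context: For positive integers $m,s$, the RT poset $[m\times s]$ is the set $\{1,\ldots,ms\}$ partitioned into $m$ blocks $B_i=\{is+1,\ldots,(i+1)s\}$ ($i=0,\ldots,m-1$); each block is a chain under the usual order of the integers, and elements of different blocks are incomparable. An ideal is a subset $I$ such that $b\in I$ and $a\preceq b$ imply $a\in I$; an anti-ideal is the complement of an ideal. Given an $N\times n$ array over an alphabet $V$ of size $v$, a set of $t$ columns is $\lambda$-covered if in the $N\times t$ subarray formed by those columns every $t$-tuple over $V$ appears as a row at least $\lambda$ times. For positive integers with $2\le t\le ms$, an ordered covering array $OCA_{\lambda}(N;t,m,s,v)$ is an $N\times ms$ array over an alphabet of size $v$ whose columns are labeled by the elements of $[m\times s]$, such that for every anti-ideal $J$ of size $t$ the set of columns labeled by $J$ is $\lambda$-covered. *)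

theory Defs
  imports Main
begin

definition rt_le :: "nat \<Rightarrow> nat \<Rightarrow> nat \<Rightarrow> nat \<Rightarrow> bool" where
  "rt_le m s a b \<longleftrightarrow> a \<in> {1..m*s} \<and> b \<in> {1..m*s} \<and> (a - 1) div s = (b - 1) div s \<and> a \<le> b"

definition rt_ideal :: "nat \<Rightarrow> nat \<Rightarrow> nat set \<Rightarrow> bool" where
  "rt_ideal m s I \<longleftrightarrow> I \<subseteq> {1..m*s} \<and> (\<forall>a b. b \<in> I \<and> rt_le m s a b \<longrightarrow> a \<in> I)"

definition rt_anti_ideal :: "nat \<Rightarrow> nat \<Rightarrow> nat set \<Rightarrow> bool" where
  "rt_anti_ideal m s J \<longleftrightarrow> (\<exists>I. rt_ideal m s I \<and> J = {1..m*s} - I)"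

text \<open>An N x n array over the alphabet {0..<v}: rows indexed by r < N, columns by labels;
  entry A r c.\<close>
definition lam_covered :: "nat \<Rightarrow> nat \<Rightarrow> nat \<Rightarrow> (nat \<Rightarrow> nat \<Rightarrow> nat) \<Rightarrow> nat set \<Rightarrow> bool" where
  "lam_covered lam N v A C \<longleftrightarrow>
     (\<forall>f. (\<forall>c\<in>C. f c < v) \<longrightarrow> lam \<le> card {r. r < N \<and> (\<forall>c\<in>C. A r c = f c)})"

definition is_OCA :: "nat \<Rightarrow> nat \<Rightarrow> nat \<Rightarrow> nat \<Rightarrow> nat \<Rightarrow> nat \<Rightarrow> (nat \<Rightarrow> nat \<Rightarrow> nat) \<Rightarrow> bool" where
  "is_OCA lam N t m s v A \<longleftrightarrow>
     2 \<le> t \<and> t \<le> m * s \<and>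
     (\<forall>r<N. \<forall>c\<in>{1..m*s}. A r c < v) \<and>
     (\<forall>J. rt_anti_ideal m s J \<and> card J = t \<longrightarrow> lam_covered lam N v A J)"

end

theory Submission
  imports Defs
begin

(* Write t = s + 1. Deleting the bottom element of every block is an order embedding of [m x s]
   into [m x (s+1)] onto the non-bottom elements, and it maps anti-ideals to anti-ideals of the
   same size; so reading an OCA on [m x (s+1)] through it gives an OCA on [m x s] (for every t).
   Conversely, map [m x (s+1)] onto [m x s] by shifting every block down by one and sending the
   bottom of block i to the top of block i+1 (mod m). An anti-ideal of size s+1 either avoids all
   bottoms, and is then carried back along the embedding, or is a whole block i, whose image is
   block i together with the top of block i+1: again an anti-ideal of size s+1, because m >= 2,
   which is what t <= m(t-1) guarantees. Reading an OCA on [m x s] through this map therefore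
   gives an OCA on [m x (s+1)]. *)

(* The element at height p (0 = bottom, p < s) of block i. *)
definition rt_cell :: "nat \<Rightarrow> nat \<Rightarrow> nat \<Rightarrow> nat" where
  "rt_cell s i p = i * s + p + 1"

lemma rt_cell_div: "p < s \<Longrightarrow> (rt_cell s i p - 1) div s = i"
  by (simp add: rt_cell_def)

lemma rt_cell_mod: "p < s \<Longrightarrow> (rt_cell s i p - 1) mod s = p"
  by (simp add: rt_cell_def)

lemma rt_cell_inject:
  "p < s \<Longrightarrow> q < s \<Longrightarrow> rt_cell s i p = rt_cell s j q \<longleftrightarrow> i = j \<and> p = q"
  by (metis rt_cell_div rt_cell_mod)

lemma rt_cell_in_ground:
  assumes "i < m" "p < s"
  shows "rt_cell s i p \<in> {1..m * s}"
proof -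
  have "rt_cell s i p \<le> Suc i * s" using assms by (simp add: rt_cell_def)
  also have "\<dots> \<le> m * s" using assms mult_le_mono1[of "Suc i" m s] by simp
  finally show ?thesis by (simp add: rt_cell_def)
qed

lemma rt_cellE:
  assumes "c \<in> {1..m * s}"
  obtains i p where "i < m" "p < s" "c = rt_cell s i p"
proof
  from assms have "0 < s" by (cases s) auto
  then show "(c - 1) mod s < s" by simp
  show "(c - 1) div s < m" using assms by (intro less_mult_imp_div_less) auto
  show "c = rt_cell s ((c - 1) div s) ((c - 1) mod s)" using assms by (simp add: rt_cell_def)
qed

lemma rt_le_cell_iff:
  assumes "i < m" "p < s" "j < m" "q < s"
  shows "rt_le m s (rt_cell s i p) (rt_cell s j q) \<longleftrightarrow> i = j \<and> p \<le> q"
  using assms rt_cell_in_ground[OF assms(1,2)] rt_cell_in_ground[OF assms(3,4)]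
  by (auto simp: rt_le_def rt_cell_div simp del: atLeastAtMost_iff) (auto simp: rt_cell_def)

lemma rt_anti_ideal_iff:
  "rt_anti_ideal m s J \<longleftrightarrow> J \<subseteq> {1..m * s} \<and> (\<forall>a\<in>J. \<forall>b. rt_le m s a b \<longrightarrow> b \<in> J)"
proof
  assume "rt_anti_ideal m s J"
  then show "J \<subseteq> {1..m * s} \<and> (\<forall>a\<in>J. \<forall>b. rt_le m s a b \<longrightarrow> b \<in> J)"
    unfolding rt_anti_ideal_def rt_ideal_def rt_le_def by blast
next
  assume J: "J \<subseteq> {1..m * s} \<and> (\<forall>a\<in>J. \<forall>b. rt_le m s a b \<longrightarrow> b \<in> J)"
  then have "rt_ideal m s ({1..m * s} - J)"
    unfolding rt_ideal_def rt_le_def by blast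
  moreover have "J = {1..m * s} - ({1..m * s} - J)" using J by blast
  ultimately show "rt_anti_ideal m s J" unfolding rt_anti_ideal_def by blast
qed

lemma rt_anti_ideal_subset: "rt_anti_ideal m s J \<Longrightarrow> J \<subseteq> {1..m * s}"
  by (simp add: rt_anti_ideal_iff)

lemma rt_anti_ideal_up:
  assumes "rt_anti_ideal m s J" "i < m" "p \<le> q" "q < s" "rt_cell s i p \<in> J"
  shows "rt_cell s i q \<in> J"
  using assms rt_le_cell_iff[of i m p s i q] by (simp add: rt_anti_ideal_iff)

lemma rt_anti_idealI:
  assumes "J \<subseteq> {1..m * s}"
    and "\<And>i p q. i < m \<Longrightarrow> p \<le> q \<Longrightarrow> q < s \<Longrightarrow> rt_cell s i p \<in> J \<Longrightarrow> rt_cell s i q \<in> J"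
  shows "rt_anti_ideal m s J"
  unfolding rt_anti_ideal_iff
proof (intro conjI ballI allI impI)
  fix a b assume "a \<in> J" "rt_le m s a b"
  then have "a \<in> {1..m * s}" "b \<in> {1..m * s}" by (auto simp: rt_le_def)
  then obtain i p j q where "i < m" "p < s" "a = rt_cell s i p" "j < m" "q < s" "b = rt_cell s j q"
    by (metis rt_cellE)
  with \<open>a \<in> J\<close> \<open>rt_le m s a b\<close> assms(2) show "b \<in> J" by (auto simp: rt_le_cell_iff)
qed (fact assms(1))

lemma lam_covered_reindex:
  assumes "inj_on g J" "lam_covered lam N v B (g ` J)"
  shows "lam_covered lam N v (\<lambda>r c. B r (g c)) J"
  unfolding lam_covered_def
proof (intro allI impI)
  fix f assume f: "\<forall>c\<in>J. f c < v"
  define h where "h = f \<circ> inv_into J g"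
  have "\<forall>d\<in>g ` J. h d < v" using f assms(1) by (auto simp: h_def)
  then have "lam \<le> card {r. r < N \<and> (\<forall>d\<in>g ` J. B r d = h d)}"
    using assms(2) unfolding lam_covered_def by blast
  also have "{r. r < N \<and> (\<forall>d\<in>g ` J. B r d = h d)} = {r. r < N \<and> (\<forall>c\<in>J. B r (g c) = f c)}"
    using assms(1) by (auto simp: h_def)
  finally show "lam \<le> card {r. r < N \<and> (\<forall>c\<in>J. B r (g c) = f c)}" .
qed

lemma is_OCA_reindex:
  assumes B: "is_OCA lam N t m s v B" and "2 \<le> t" "t \<le> m * s'"
    and g_ground: "g ` {1..m * s'} \<subseteq> {1..m * s}"
    and g_anti_ideal: "\<And>J. rt_anti_ideal m s' J \<Longrightarrow> card J = t \<Longrightarrow>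
          inj_on g J \<and> rt_anti_ideal m s (g ` J)"
  shows "is_OCA lam N t m s' v (\<lambda>r c. B r (g c))"
  unfolding is_OCA_def
proof (intro conjI allI impI ballI)
  fix r c assume "r < N" "c \<in> {1..m * s'}"
  with B g_ground show "B r (g c) < v" unfolding is_OCA_def by blast
next
  fix J assume J: "rt_anti_ideal m s' J \<and> card J = t"
  with g_anti_ideal have inj: "inj_on g J" and "rt_anti_ideal m s (g ` J)" by auto
  moreover have "card (g ` J) = t" using inj J by (simp add: card_image)
  ultimately have "lam_covered lam N v B (g ` J)" using B unfolding is_OCA_def by blast
  with inj show "lam_covered lam N v (\<lambda>r c. B r (g c)) J" by (rule lam_covered_reindex)
qed (use assms in auto)

definition rt_lift :: "nat \<Rightarrow> nat \<Rightarrow> nat" where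
  "rt_lift s c = rt_cell (Suc s) ((c - 1) div s) (Suc ((c - 1) mod s))"

lemma rt_lift_cell: "p < s \<Longrightarrow> rt_lift s (rt_cell s i p) = rt_cell (Suc s) i (Suc p)"
  by (simp only: rt_lift_def rt_cell_div rt_cell_mod)

lemma rt_lift_in_ground: "c \<in> {1..m * s} \<Longrightarrow> rt_lift s c \<in> {1..m * Suc s}"
  by (metis rt_cellE rt_lift_cell rt_cell_in_ground Suc_mono)

lemma inj_on_rt_lift: "inj_on (rt_lift s) {1..m * s}"
proof
  fix a b assume "a \<in> {1..m * s}" "b \<in> {1..m * s}" "rt_lift s a = rt_lift s b"
  then show "a = b" by (elim rt_cellE) (simp add: rt_lift_cell rt_cell_inject)
qed

lemma rt_anti_ideal_rt_lift_image_iff: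
  assumes J: "J \<subseteq> {1..m * s}"
  shows "rt_anti_ideal m (Suc s) (rt_lift s ` J) \<longleftrightarrow> rt_anti_ideal m s J"
proof
  assume lifted: "rt_anti_ideal m (Suc s) (rt_lift s ` J)"
  show "rt_anti_ideal m s J"
  proof (rule rt_anti_idealI[OF J])
    fix i p q assume "i < m" "p \<le> q" "q < s" "rt_cell s i p \<in> J"
    then have "rt_cell (Suc s) i (Suc q) \<in> rt_lift s ` J"
      using rt_anti_ideal_up[OF lifted, of i "Suc p" "Suc q"] by (force simp: rt_lift_cell)
    then obtain c where "c \<in> J" "rt_lift s (rt_cell s i q) = rt_lift s c"
      using \<open>q < s\<close> by (auto simp: rt_lift_cell)
    moreover have "rt_cell s i q \<in> {1..m * s}" using \<open>i < m\<close> \<open>q < s\<close> by (rule rt_cell_in_ground)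
    ultimately show "rt_cell s i q \<in> J"
      using J inj_on_rt_lift[of s m] by (metis inj_onD subsetD)
  qed
next
  assume "rt_anti_ideal m s J"
  show "rt_anti_ideal m (Suc s) (rt_lift s ` J)"
  proof (rule rt_anti_idealI)
    show "rt_lift s ` J \<subseteq> {1..m * Suc s}" using J rt_lift_in_ground by blast
  next
    fix i p q assume "i < m" "p \<le> q" "q < Suc s" "rt_cell (Suc s) i p \<in> rt_lift s ` J"
    then obtain c where c: "c \<in> J" "rt_cell (Suc s) i p = rt_lift s c" by blast
    then obtain j r where "j < m" "r < s" "c = rt_cell s j r" using J by (meson rt_cellE subsetD)
    with c \<open>p \<le> q\<close> \<open>q < Suc s\<close> have "j = i" "Suc r = p"
      by (simp_all add: rt_lift_cell rt_cell_inject)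
    with \<open>p \<le> q\<close> \<open>q < Suc s\<close> obtain q' where q': "q = Suc q'" "r \<le> q'" "q' < s"
      by (cases q) auto
    have "rt_cell s i q' \<in> J"
      using rt_anti_ideal_up[OF \<open>rt_anti_ideal m s J\<close> \<open>i < m\<close> q'(2,3)]
        c \<open>c = rt_cell s j r\<close> \<open>j = i\<close>
      by simp
    then show "rt_cell (Suc s) i q \<in> rt_lift s ` J"
      using q' by (metis image_eqI rt_lift_cell)
  qed
qed

lemma is_OCA_rt_lift:
  assumes A: "is_OCA lam N t m (Suc s) v A" and "t \<le> m * s"
  shows "is_OCA lam N t m s v (\<lambda>r c. A r (rt_lift s c))"
proof (rule is_OCA_reindex[OF A _ \<open>t \<le> m * s\<close>])
  show "2 \<le> t" using A by (simp add: is_OCA_def)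
  show "rt_lift s ` {1..m * s} \<subseteq> {1..m * Suc s}" using rt_lift_in_ground by blast
  show "inj_on (rt_lift s) J \<and> rt_anti_ideal m (Suc s) (rt_lift s ` J)" if "rt_anti_ideal m s J" for J
  proof
    have "J \<subseteq> {1..m * s}" using that by (rule rt_anti_ideal_subset)
    then show "inj_on (rt_lift s) J" by (rule inj_on_subset[OF inj_on_rt_lift])
    show "rt_anti_ideal m (Suc s) (rt_lift s ` J)"
      using \<open>J \<subseteq> {1..m * s}\<close> that by (simp add: rt_anti_ideal_rt_lift_image_iff)
  qed
qed

definition rt_lower :: "nat \<Rightarrow> nat \<Rightarrow> nat \<Rightarrow> nat" where
  "rt_lower m s c = (let i = (c - 1) div Suc s; p = (c - 1) mod Suc s in
     if p = 0 then rt_cell s (Suc i mod m) (s - 1) else rt_cell s i (p - 1))"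

lemma rt_lower_cell:
  "p < Suc s \<Longrightarrow> rt_lower m s (rt_cell (Suc s) i p) =
     (if p = 0 then rt_cell s (Suc i mod m) (s - 1) else rt_cell s i (p - 1))"
  by (simp only: rt_lower_def Let_def rt_cell_div rt_cell_mod)

lemma rt_lower_in_ground:
  assumes "0 < s" "c \<in> {1..m * Suc s}"
  shows "rt_lower m s c \<in> {1..m * s}"
proof -
  obtain i p where "i < m" "p < Suc s" "c = rt_cell (Suc s) i p" using assms(2) by (rule rt_cellE)
  moreover have "Suc i mod m < m" using \<open>i < m\<close> by simp
  ultimately show ?thesis
    using assms(1) rt_cell_in_ground[of "Suc i mod m" m "s - 1" s] rt_cell_in_ground[of i m "p - 1" s]
    by (simp add: rt_lower_cell)
qed

lemma card_rt_block: "card (rt_cell s i ` {..<s}) = s"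
  by (simp add: card_image inj_on_def rt_cell_inject)

lemma rt_anti_ideal_block: "i < m \<Longrightarrow> rt_anti_ideal m s (rt_cell s i ` {..<s})"
  by (rule rt_anti_idealI) (auto simp: rt_cell_inject dest: rt_cell_in_ground[of i m _ s])

lemma rt_anti_ideal_insert_top:
  assumes "rt_anti_ideal m s J" "j < m" "0 < s"
  shows "rt_anti_ideal m s (insert (rt_cell s j (s - 1)) J)"
proof (rule rt_anti_idealI)
  show "insert (rt_cell s j (s - 1)) J \<subseteq> {1..m * s}"
    using assms rt_anti_ideal_subset rt_cell_in_ground[of j m "s - 1" s] by simp
  fix i p q assume "i < m" "p \<le> q" "q < s" "rt_cell s i p \<in> insert (rt_cell s j (s - 1)) J"
  with assms show "rt_cell s i q \<in> insert (rt_cell s j (s - 1)) J"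
    by (auto simp: rt_cell_inject intro: rt_anti_ideal_up)
qed

lemma rt_anti_ideal_block_of_bottom:
  assumes "rt_anti_ideal m s J" "i < m" "rt_cell s i 0 \<in> J"
  shows "rt_cell s i ` {..<s} \<subseteq> J"
  using rt_anti_ideal_up[OF assms(1,2) _ _ assms(3)] by blast

lemma rt_lower_block:
  "rt_lower m s ` rt_cell (Suc s) i ` {..<Suc s} =
    insert (rt_cell s (Suc i mod m) (s - 1)) (rt_cell s i ` {..<s})"
proof -
  have "(\<lambda>p. rt_lower m s (rt_cell (Suc s) i (Suc p))) ` {..<s} = rt_cell s i ` {..<s}"
    by (rule image_cong) (simp_all add: rt_lower_cell)
  then show ?thesis by (simp add: lessThan_Suc_eq_insert_0 image_image rt_lower_cell)
qed

lemma rt_lower_anti_ideal: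
  assumes "0 < s" "2 \<le> m" and J: "rt_anti_ideal m (Suc s) J" "card J = Suc s"
  shows "inj_on (rt_lower m s) J \<and> rt_anti_ideal m s (rt_lower m s ` J)"
proof (cases "\<exists>i<m. rt_cell (Suc s) i 0 \<in> J")
  case True
  then obtain i where i: "i < m" "rt_cell (Suc s) i 0 \<in> J" by blast
  have "finite J" using rt_anti_ideal_subset[OF J(1)] by (rule finite_subset) simp
  then have J_block: "J = rt_cell (Suc s) i ` {..<Suc s}"
    using rt_anti_ideal_block_of_bottom[OF J(1) i] J(2) card_rt_block
    by (metis card_subset_eq)
  let ?top = "rt_cell s (Suc i mod m) (s - 1)"
  have image: "rt_lower m s ` J = insert ?top (rt_cell s i ` {..<s})"
    unfolding J_block by (rule rt_lower_block)
  have "Suc i mod m \<noteq> i"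
    using \<open>i < m\<close> \<open>2 \<le> m\<close> by (cases "Suc i = m") auto
  then have "?top \<notin> rt_cell s i ` {..<s}"
    using \<open>0 < s\<close> by (auto simp: rt_cell_inject)
  then have "card (rt_lower m s ` J) = card J"
    by (simp add: image J(2) card_rt_block)
  then have "inj_on (rt_lower m s) J"
    using \<open>finite J\<close> by (simp add: inj_on_iff_eq_card)
  moreover have "rt_anti_ideal m s (rt_lower m s ` J)"
    unfolding image using i(1) \<open>0 < s\<close>
    by (intro rt_anti_ideal_insert_top rt_anti_ideal_block) simp_all
  ultimately show ?thesis ..
next
  case False
  have lift_lower: "rt_lift s (rt_lower m s c) = c" if "c \<in> J" for c
  proof -
    obtain i p where "i < m" "p < Suc s" "c = rt_cell (Suc s) i p"
      using \<open>c \<in> J\<close> rt_anti_ideal_subset[OF J(1)] by (meson rt_cellE subsetD)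
    moreover have "p \<noteq> 0" using False \<open>c \<in> J\<close> calculation by (cases "p = 0") auto
    ultimately show ?thesis by (cases p) (simp_all add: rt_lower_cell rt_lift_cell)
  qed
  then have J_lift: "J = rt_lift s ` rt_lower m s ` J"
    by (simp add: image_image)
  have "rt_lower m s ` J \<subseteq> {1..m * s}"
    using rt_anti_ideal_subset[OF J(1)] rt_lower_in_ground[OF \<open>0 < s\<close>] by blast
  then have "rt_anti_ideal m s (rt_lower m s ` J)"
    using J(1) J_lift rt_anti_ideal_rt_lift_image_iff by metis
  with lift_lower show ?thesis by (auto intro: inj_on_inverseI)
qed

lemma is_OCA_rt_lower:
  assumes B: "is_OCA lam N (Suc s) m s v B" and "0 < s" "2 \<le> m"
  shows "is_OCA lam N (Suc s) m (Suc s) v (\<lambda>r c. B r (rt_lower m s c))"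
proof (rule is_OCA_reindex[OF B])
  show "2 \<le> Suc s" using \<open>0 < s\<close> by simp
  show "Suc s \<le> m * Suc s" using \<open>2 \<le> m\<close> mult_le_mono1[of 1 m "Suc s"] by simp
  show "rt_lower m s ` {1..m * Suc s} \<subseteq> {1..m * s}"
    using rt_lower_in_ground[OF \<open>0 < s\<close>] by blast
qed (rule rt_lower_anti_ideal[OF \<open>0 < s\<close> \<open>2 \<le> m\<close>])

theorem corollary1:
  fixes lam N t m v :: nat
  assumes "0 < lam" "0 < N" "0 < t" "0 < m" "0 < v"
    and "2 \<le> t" and "t \<le> m * (t - 1)"
  shows "(\<exists>A. is_OCA lam N t m t v A) \<longleftrightarrow> (\<exists>A. is_OCA lam N t m (t - 1) v A)"
proof -
  obtain s where t: "t = Suc s" and "0 < s" using \<open>2 \<le> t\<close> by (cases t) auto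
  have "2 \<le> m"
    using \<open>t \<le> m * (t - 1)\<close> \<open>0 < m\<close> t by (cases "m = 1") auto
  have "Suc s \<le> m * s" using \<open>t \<le> m * (t - 1)\<close> t by simp
  show ?thesis
    unfolding t diff_Suc_1
    using is_OCA_rt_lift[OF _ \<open>Suc s \<le> m * s\<close>] is_OCA_rt_lower[OF _ \<open>0 < s\<close> \<open>2 \<le> m\<close>]
    by blast
qed

end
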